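(* Let $G$ be a group of order $q$ in which the discrete logarithm problem is hard, and let $g,h$ be randomly chosen generators of $G$. For rounds $k=1,\dots,l$, let participant $P_i$ hold $K_i^{(k)},r_i^{(k)}\in\mathbb{Z}_q$ and commitment $c_i^{(k)}=g^{K_i^{(k)}}h^{r_i^{(k)}}$, and let its ciphertext of round $k$ be $O_i^{(k)}\in\mathbb{Z}_q$, which encodes the message $O_i^{(k)}-K_i^{(k)}$ (encoding no message if this equals $0$). If a poly-time participant $P_i$ generates $(O_i^{(1)},c_i^{(1)}),\dots,(O_i^{(l)},c_i^{(l)})$ and $P_i$ knows $\alpha\in\mathbb{Z}_q$ such that \[ \bigwedge_{k=2}^{l}\left(\left(c_i^{(1)}\prod_{j=2}^{k}(c_i^{(j)})^{-1}=g^{O_i^{(1)}-\sum_{j=2}^{k}O_i^{(j)}}h^{\alpha}\right)\vee\left(c_i^{(k)}=g^{O_i^{(k)}}h^{\alpha}\right)\right), \] then at most one ciphertext among $O_i^{(2)},\dots,O_i^{(l)}$ encodes the same message as $O_i^{(1)}$, while the other ciphertexts among $O_i^{(2)},\dots,O_i^{(l)}$ encode no message.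
   Context: Setting: dining cryptographers protocol with Pedersen commitments. In each round $k$, each pair $P_i,P_j$ shares $K_{ij}^{(k)},r_{ij}^{(k)}\in\mathbb{Z}_q$ with $K_{ji}^{(k)}=-K_{ij}^{(k)}$, $r_{ji}^{(k)}=-r_{ij}^{(k)}$; $K_i^{(k)}=\sum_j K_{ij}^{(k)}$, $r_i^{(k)}=\sum_j r_{ij}^{(k)}$, $c_i^{(k)}=\prod_j g^{K_{ij}^{(k)}}h^{r_{ij}^{(k)}}$. "Poly-time" means probabilistic polynomial-time, unable (by the discrete logarithm assumption) to compute $\log_h g$. *)

theory Defs
  imports "HOL-Algebra.Algebra" "HOL-Number_Theory.Cong"
begin

definition pcommit :: "('a, 'b) monoid_scheme \<Rightarrow> 'a \<Rightarrow> 'a \<Rightarrow> int \<Rightarrow> int \<Rightarrow> 'a" where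
  "pcommit G g h a b = (g [^]\<^bsub>G\<^esub> a) \<otimes>\<^bsub>G\<^esub> (h [^]\<^bsub>G\<^esub> b)"

text \<open>From such a pair
  one computes log_h g = (b' - b)/(a - a') in Z_q; this is what the discrete logarithm
  assumption rules out for a poly-time party.\<close>
definition pcollision :: "('a, 'b) monoid_scheme \<Rightarrow> int \<Rightarrow> 'a \<Rightarrow> 'a \<Rightarrow> int \<times> int \<Rightarrow> int \<times> int \<Rightarrow> bool" where
  "pcollision G q g h p p' =
     (\<not> ([fst p = fst p'] (mod q) \<and> [snd p = snd p'] (mod q)) \<and>
      pcommit G g h (fst p) (snd p) = pcommit G g h (fst p') (snd p'))"

end

theory Submission
  imports Defs
begin

text \<open>Commitments multiply by adding openings, so the hypothesis on round k says that
  either c 1 / (c 2 \<dots> c k), which commits to K 1 - (K 2 + \<dots> + K k), or c k, which commits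
  to K k, is also opened with first component O 1 - (O 2 + \<dots> + O k), resp. O k.  Unless
  this yields a Pedersen collision (impossible for a poly-time party under the discrete
  logarithm assumption), the two openings agree mod q.  Writing M k = O k - K k for the
  encoded messages, this gives for every k \<ge> 2 that M 2 + \<dots> + M k = M 1 or M k = 0, and
  an induction on l shows that then at most one M k with k \<ge> 2 is nonzero, and it equals
  M 1.\<close>

context comm_group
begin

lemma pcommit_closed [simp]:
  "g \<in> carrier G \<Longrightarrow> h \<in> carrier G \<Longrightarrow> pcommit G g h a b \<in> carrier G"
  unfolding pcommit_def by simp

lemma pcommit_mult:
  "g \<in> carrier G \<Longrightarrow> h \<in> carrier G \<Longrightarrow>
    pcommit G g h a b \<otimes> pcommit G g h a' b' = pcommit G g h (a + a') (b + b')"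
  unfolding pcommit_def by (simp add: int_pow_mult m_ac)

lemma pcommit_inv:
  "g \<in> carrier G \<Longrightarrow> h \<in> carrier G \<Longrightarrow>
    inv (pcommit G g h a b) = pcommit G g h (- a) (- b)"
  unfolding pcommit_def by (simp add: inv_mult int_pow_neg)

lemma pcommit_finprod:
  assumes "finite A" "g \<in> carrier G" "h \<in> carrier G"
  shows "finprod G (\<lambda>j. pcommit G g h (a j) (b j)) A = pcommit G g h (sum a A) (sum b A)"
  using assms(1)
proof (induction A rule: finite_induct)
  case empty
  then show ?case using assms by (simp add: pcommit_def)
next
  case (insert x F)
  then show ?case using assms by (simp add: Pi_def pcommit_mult)
qed

lemma pcommit_div_finprod:
  assumes "finite A" "g \<in> carrier G" "h \<in> carrier G"
  shows "pcommit G g h a0 b0 \<otimes> finprod G (\<lambda>j. inv (pcommit G g h (a j) (b j))) A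
           = pcommit G g h (a0 - sum a A) (b0 - sum b A)"
proof -
  have "finprod G (\<lambda>j. inv (pcommit G g h (a j) (b j))) A
          = finprod G (\<lambda>j. pcommit G g h (- a j) (- b j)) A"
    using assms by (intro finprod_cong') (auto simp: pcommit_inv)
  also have "\<dots> = pcommit G g h (- sum a A) (- sum b A)"
    using assms by (simp add: pcommit_finprod sum_negf)
  finally show ?thesis
    using assms by (simp add: pcommit_mult)
qed

end

lemma pcommit_eq_imp_cong:
  assumes "pcommit G g h a b = pcommit G g h a' b'"
    and "\<not> pcollision G m g h (a, b) (a', b')"
  shows "[a = a'] (mod m)"
  using assms unfolding pcollision_def by auto

lemma sum_cong_sum_subset:
  fixes A :: "nat \<Rightarrow> int"
  assumes "finite B" "S \<subseteq> B" "\<forall>k\<in>B - S. [A k = 0] (mod m)"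
  shows "[sum A B = sum A S] (mod m)"
proof -
  have "[sum A (B - S) = (\<Sum>k\<in>B - S. 0)] (mod m)"
    using assms(3) by (intro cong_sum) auto
  then have "[sum A (B - S) + sum A S = 0 + sum A S] (mod m)"
    by (intro cong_add) simp_all
  then show ?thesis
    using assms(1,2) by (simp add: sum.subset_diff[of S B])
qed

lemma at_most_one_nonzero_if_prefix_sums:
  fixes A :: "nat \<Rightarrow> int"
  assumes "\<forall>k\<in>{2..l}. [(\<Sum>j=2..k. A j) = A 1] (mod m) \<or> [A k = 0] (mod m)"
  shows "\<exists>S\<subseteq>{2..l}. card S \<le> 1 \<and> (\<forall>k\<in>S. [A k = A 1] (mod m))
           \<and> (\<forall>k\<in>{2..l} - S. [A k = 0] (mod m))"
  using assms
proof (induction l)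
  case 0
  then show ?case by auto
next
  case (Suc l)
  show ?case
  proof (cases "Suc l < 2")
    case True
    then show ?thesis by (intro exI[of _ "{}"]) auto
  next
    case False
    then have ivl: "{2..Suc l} = insert (Suc l) {2..l}" by auto
    obtain S where S: "S \<subseteq> {2..l}" "card S \<le> 1" "\<forall>k\<in>S. [A k = A 1] (mod m)"
      "\<forall>k\<in>{2..l} - S. [A k = 0] (mod m)"
      using Suc by auto
    show ?thesis
    proof (cases "[A (Suc l) = 0] (mod m)")
      case True
      then show ?thesis
        using S ivl by (intro exI[of _ S]) auto
    next
      case nonzero: False
      have "Suc l \<in> {2..Suc l}"
        using False by simp
      then have "[(\<Sum>j=2..Suc l. A j) = A 1] (mod m)"
        using Suc.prems nonzero by blast
      moreover have "[(\<Sum>j=2..l. A j) = sum A S] (mod m)"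
        using S by (intro sum_cong_sum_subset) auto
      ultimately have last: "[sum A S + A (Suc l) = A 1] (mod m)"
        using False by (simp add: sum.cl_ivl_Suc) (meson cong_add cong_refl cong_sym cong_trans)
      consider "S = {}" | s where "S = {s}"
        using S(2) by (metis card_0_eq card_1_singletonE finite_subset le_eq_less_or_eq
            less_one S(1) finite_atLeastAtMost)
      then show ?thesis
      proof cases
        case 1
        then show ?thesis
          using S ivl last by (intro exI[of _ "{Suc l}"]) auto
      next
        case (2 s)
        then have "[A 1 + A (Suc l) = A 1 + 0] (mod m)"
          using S(3) last by simp (meson cong_add cong_refl cong_sym cong_trans)
        then show ?thesis
          using nonzero cong_add_lcancel by blast
      qed
    qed
  qed
qed

theorem theorem3:
  fixes G :: "('a, 'b) monoid_scheme"
    and q :: nat and g h :: 'a and n i l :: nat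
    and Kp rp :: "nat \<Rightarrow> nat \<Rightarrow> nat \<Rightarrow> int"
    and Oc :: "nat \<Rightarrow> int" and \<alpha> :: int
    and K r :: "nat \<Rightarrow> int" and c :: "nat \<Rightarrow> 'a"
  assumes grp: "comm_group G" and fin: "finite (carrier G)"
    and ord: "order G = q"
    and gG: "g \<in> carrier G" and hG: "h \<in> carrier G"
    and g_gen: "generate G {g} = carrier G" and h_gen: "generate G {h} = carrier G"
    and i_in: "i < n"
    and Kanti: "\<And>k j j'. [Kp k j' j = - Kp k j j'] (mod int q)"
    and ranti: "\<And>k j j'. [rp k j' j = - rp k j j'] (mod int q)"
    and K_def: "\<And>k. K k = (\<Sum>j\<in>{..<n} - {i}. Kp k i j)"
    and r_def: "\<And>k. r k = (\<Sum>j\<in>{..<n} - {i}. rp k i j)"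
    and c_def: "\<And>k. c k = finprod G (\<lambda>j. pcommit G g h (Kp k i j) (rp k i j)) ({..<n} - {i})"
    and cond: "\<forall>k\<in>{2..l}.
        (c 1 \<otimes>\<^bsub>G\<^esub> finprod G (\<lambda>j. inv\<^bsub>G\<^esub> (c j)) {2..k}
           = pcommit G g h (Oc 1 - (\<Sum>j=2..k. Oc j)) \<alpha>)
        \<or> (c k = pcommit G g h (Oc k) \<alpha>)"
  shows "(\<exists>S\<subseteq>{2..l}. card S \<le> 1
            \<and> (\<forall>k\<in>S. [Oc k - K k = Oc 1 - K 1] (mod int q))
            \<and> (\<forall>k\<in>{2..l} - S. [Oc k - K k = 0] (mod int q)))
         \<or> (\<exists>k\<in>{2..l}.
              pcollision G (int q) g h (K 1 - (\<Sum>j=2..k. K j), r 1 - (\<Sum>j=2..k. r j))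
                                      (Oc 1 - (\<Sum>j=2..k. Oc j), \<alpha>)
            \<or> pcollision G (int q) g h (K k, r k) (Oc k, \<alpha>))"
proof (rule disjCI)
  assume no_collision: "\<not> (\<exists>k\<in>{2..l}.
              pcollision G (int q) g h (K 1 - (\<Sum>j=2..k. K j), r 1 - (\<Sum>j=2..k. r j))
                                      (Oc 1 - (\<Sum>j=2..k. Oc j), \<alpha>)
            \<or> pcollision G (int q) g h (K k, r k) (Oc k, \<alpha>))"
  interpret comm_group G by (rule grp)
  have c_eq: "\<And>k. c k = pcommit G g h (K k) (r k)"
    unfolding c_def K_def r_def using gG hG by (simp add: pcommit_finprod)
  have "[(\<Sum>j=2..k. Oc j - K j) = Oc 1 - K 1] (mod int q) \<or> [Oc k - K k = 0] (mod int q)"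
    if k: "k \<in> {2..l}" for k
  proof -
    have "pcommit G g h (K 1 - (\<Sum>j=2..k. K j)) (r 1 - (\<Sum>j=2..k. r j))
            = pcommit G g h (Oc 1 - (\<Sum>j=2..k. Oc j)) \<alpha>
          \<or> pcommit G g h (K k) (r k) = pcommit G g h (Oc k) \<alpha>"
      using cond k gG hG by (simp add: c_eq pcommit_div_finprod)
    then have "[K 1 - (\<Sum>j=2..k. K j) = Oc 1 - (\<Sum>j=2..k. Oc j)] (mod int q) \<or> [K k = Oc k] (mod int q)"
      using k no_collision by (meson pcommit_eq_imp_cong)
    then show ?thesis
      by (auto simp: cong_iff_dvd_diff sum_subtractf algebra_simps dest: dvd_minus_iff[THEN iffD2])
  qed
  then show "\<exists>S\<subseteq>{2..l}. card S \<le> 1 \<and> (\<forall>k\<in>S. [Oc k - K k = Oc 1 - K 1] (mod int q))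
               \<and> (\<forall>k\<in>{2..l} - S. [Oc k - K k = 0] (mod int q))"
    by (intro at_most_one_nonzero_if_prefix_sums) blast
qed

end
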